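(* Assume Case 2 holds and $d=0$. Then $\delta>d$, and with $\mathcal{I}_f=[l_1,\alpha]$ we have $w_l(Q^n)=\gamma_n=\gamma\delta^{n-1}$ for every $n\ge1$ and every $l\in\mathcal{I}_f$. Moreover, if $\delta=T_{s-1}$ then $\mathcal{I}_f=\{l_1\}$ and $w_{l_1}(Q^n)=\gamma_n$ for all $n\ge1$.
   Context: Let $f(z,w)=(p(z),q(z,w))$ be a holomorphic skew product germ at the origin of $\mathbb{C}^2$ with $f(0,0)=(0,0)$, where $p(z)=a_\delta z^\delta+O(z^{\delta+1})$ with $a_\delta\neq0$ and integer $\delta\ge1$, and $q(z,w)=\sum_{i+j\ge1}b_{ij}z^iw^j$ is not identically zero. For $n\ge1$ write $f^n=(p^n,Q^n)$. For a nonzero germ $g=\sum g_{ij}z^iw^j$ and real $l>0$ let $w_l(g)=\min\{i+lj: g_{ij}\neq0\}$. The Newton polygon $N(g)$ is the convex hull of $\bigcup_{g_{ij}\neq0}\{(x,y):x\ge i,\ y\ge j\}$. Let $(n_1,m_1),\dots,(n_s,m_s)$ be the vertices of $N(q)$ with $n_1<\cdots<n_s$, $m_1>\cdots>m_s$; for $1\le k\le s-1$ let $T_k$ be the $y$-intercept of the line through $(n_k,m_k)$ and $(n_{k+1},m_{k+1})$. Case 2 means: $s>1$ and $\delta\le T_{s-1}$; set $(\gamma,d)=(n_s,m_s)$ and $l_1=\frac{n_s-n_{s-1}}{m_{s-1}-m_s}$. Define $\gamma_n=\gamma(\delta^{n-1}+\delta^{n-2}d+\cdots+d^{n-1})$ (with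 $0^0=1$, so $\gamma_n=\gamma\delta^{n-1}$ when $d=0$) and $\alpha=\gamma/(\delta-d)$. *)

theory Defs
  imports "HOL-Analysis.Analysis"
begin

text \<open>Bivariate formal power series in z (first index) and w (second index),
  represented by their coefficient functions.  A germ sum g_ij z^i w^j is g.\<close>

type_synonym bser = "nat \<Rightarrow> nat \<Rightarrow> complex"

definition bone :: bser where
  "bone = (\<lambda>i j. if i = 0 \<and> j = 0 then 1 else 0)"

definition bZ :: bser where
  "bZ = (\<lambda>i j. if i = 1 \<and> j = 0 then 1 else 0)"

definition bW :: bser where
  "bW = (\<lambda>i j. if i = 0 \<and> j = 1 then 1 else 0)"

definition bmult :: "bser \<Rightarrow> bser \<Rightarrow> bser" where
  "bmult F G = (\<lambda>i j. \<Sum>a\<le>i. \<Sum>b\<le>j. F a b * G (i - a) (j - b))"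

fun bpow :: "bser \<Rightarrow> nat \<Rightarrow> bser" where
  "bpow F 0 = bone"
| "bpow F (Suc k) = bmult F (bpow F k)"

text \<open>Formal substitution g(P, R) for series P, R without constant term:
  the coefficient of z^i w^j only involves the terms g_uv P^u R^v with u+v \<le> i+j.\<close>
definition bsubst :: "bser \<Rightarrow> bser \<Rightarrow> bser \<Rightarrow> bser" where
  "bsubst g P R = (\<lambda>i j. \<Sum>u\<le>i+j. \<Sum>v\<le>i+j. g u v * bmult (bpow P u) (bpow R v) i j)"

definition zser :: "(nat \<Rightarrow> complex) \<Rightarrow> bser" where
  "zser a = (\<lambda>i j. if j = 0 then a i else 0)"

text \<open>Iterates f^n = (p^n, Q^n) of the skew product f(z,w) = (p(z), q(z,w)),
  via f^(n+1) = f \<circ> f^n.\<close>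
fun skew_iter :: "(nat \<Rightarrow> complex) \<Rightarrow> bser \<Rightarrow> nat \<Rightarrow> bser \<times> bser" where
  "skew_iter a q 0 = (bZ, bW)"
| "skew_iter a q (Suc n) =
     (let (P, R) = skew_iter a q n in (bsubst (zser a) P R, bsubst q P R))"

definition Qit :: "(nat \<Rightarrow> complex) \<Rightarrow> bser \<Rightarrow> nat \<Rightarrow> bser" where
  "Qit a q n = snd (skew_iter a q n)"

definition wl :: "real \<Rightarrow> bser \<Rightarrow> real" where
  "wl l g = Inf {real i + l * real j | i j. g i j \<noteq> 0}"

definition newton_polygon :: "bser \<Rightarrow> (real \<times> real) set" where
  "newton_polygon g = convex hull (\<Union>{ {(x, y). x \<ge> real i \<and> y \<ge> real j} | i j. g i j \<noteq> 0})"

definition y_intercept :: "real \<Rightarrow> real \<Rightarrow> real \<Rightarrow> real \<Rightarrow> real" where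
  "y_intercept n1 m1 n2 m2 = m1 - n1 * (m2 - m1) / (n2 - n1)"

definition gamma_n :: "nat \<Rightarrow> nat \<Rightarrow> nat \<Rightarrow> nat \<Rightarrow> nat" where
  "gamma_n \<gamma> \<delta> d n = \<gamma> * (\<Sum>k<n. \<delta> ^ (n - 1 - k) * d ^ k)"

end

theory Submission
  imports Defs
begin

(* Write f^n = (P_n, Q_n), so that P_(n+1) = p(P_n) and Q_(n+1) = q(P_n, Q_n). Since d = 0, the
   last edge of the Newton polygon of q joins (n_(s-1), m_(s-1)) to (gamma, 0); hence every
   monomial z^u w^v of q satisfies u + l v >= gamma for l >= l1, and Case 2 says exactly
   l1 <= alpha = gamma/delta. Substituting w_l(P_n) >= delta^n and w_l(Q_n) >= gamma delta^(n-1)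
   = alpha delta^n into q propagates the lower bound w_l(Q_n) >= gamma_n. For equality one follows
   the leading monomial of Q_n for the weight alpha: leading monomials multiply, so they survive
   substitution without cancellation, and that of Q_n has alpha-weight gamma_n, hence l-weight at
   most gamma_n for l <= alpha. *)

section \<open>Leading monomials for a weight\<close>

definition wdeg :: "real \<Rightarrow> nat \<times> nat \<Rightarrow> real" where
  "wdeg l m = real (fst m) + l * real (snd m)"

(* Ties are broken towards the larger w-exponent, so the monomials of q tying with its leading one
   have smaller w-exponent, and stay below it after substitution (lead_mono_bsubst_homogeneous). *)
definition mono_le :: "real \<Rightarrow> nat \<times> nat \<Rightarrow> nat \<times> nat \<Rightarrow> bool" where
  "mono_le l m m' \<longleftrightarrow> wdeg l m < wdeg l m' \<or> (wdeg l m = wdeg l m' \<and> snd m' \<le> snd m)"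

definition lead_mono :: "real \<Rightarrow> bser \<Rightarrow> nat \<times> nat \<Rightarrow> bool" where
  "lead_mono l F m \<longleftrightarrow> F (fst m) (snd m) \<noteq> 0 \<and> (\<forall>i j. F i j \<noteq> 0 \<longrightarrow> mono_le l m (i, j))"

definition wdeg_ge :: "real \<Rightarrow> bser \<Rightarrow> real \<Rightarrow> bool" where
  "wdeg_ge l F c \<longleftrightarrow> (\<forall>i j. F i j \<noteq> 0 \<longrightarrow> c \<le> wdeg l (i, j))"

definition smul :: "nat \<Rightarrow> nat \<times> nat \<Rightarrow> nat \<times> nat" where
  "smul k m = (k * fst m, k * snd m)"

lemma wdeg_add: "wdeg l (m + m') = wdeg l m + wdeg l m'"
  by (simp add: wdeg_def algebra_simps)

lemma wdeg_smul: "wdeg l (smul k m) = real k * wdeg l m"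
  by (simp add: wdeg_def smul_def algebra_simps)

lemma mono_le_refl: "mono_le l m m"
  by (simp add: mono_le_def)

lemma mono_le_trans: "mono_le l m m' \<Longrightarrow> mono_le l m' m'' \<Longrightarrow> mono_le l m m''"
  unfolding mono_le_def by auto

lemma mono_le_antisym: "mono_le l m m' \<Longrightarrow> mono_le l m' m \<Longrightarrow> m = m'"
  unfolding mono_le_def wdeg_def by (cases m; cases m') auto

lemma mono_le_total: "mono_le l m m' \<or> mono_le l m' m"
  unfolding mono_le_def by auto

lemma mono_le_strictI:
  "wdeg l m < wdeg l m' \<or> (wdeg l m = wdeg l m' \<and> snd m' < snd m) \<Longrightarrow> mono_le l m m' \<and> m' \<noteq> m"
  by (auto simp: mono_le_def)

lemma mono_le_add: "mono_le l p m \<Longrightarrow> mono_le l r m' \<Longrightarrow> mono_le l (p + r) (m + m')"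
  unfolding mono_le_def wdeg_add by (auto simp: wdeg_def)

lemma mono_le_add_cancel:
  assumes "mono_le l p m" "mono_le l r m'" "m + m' = p + r"
  shows "m = p \<and> m' = r"
proof -
  have "wdeg l m + wdeg l m' = wdeg l p + wdeg l r"
    using assms(3) by (metis wdeg_add)
  then have "wdeg l m = wdeg l p" "wdeg l m' = wdeg l r"
    using assms(1,2) unfolding mono_le_def by linarith+
  moreover have "snd m = snd p" "snd m' = snd r"
    using assms calculation unfolding mono_le_def prod_eq_iff by auto
  ultimately show ?thesis
    unfolding wdeg_def prod_eq_iff by auto
qed

lemma mono_le_finite_min:
  "finite S \<Longrightarrow> S \<noteq> {} \<Longrightarrow> \<exists>m\<in>S. \<forall>m'\<in>S. mono_le l m m'"
proof (induction S rule: finite_ne_induct)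
  case (singleton x)
  then show ?case by (simp add: mono_le_refl)
next
  case (insert x S)
  then obtain m where "m \<in> S" "\<forall>m'\<in>S. mono_le l m m'" by blast
  then show ?case
    using mono_le_total[of l x m] by (metis insert_iff mono_le_refl mono_le_trans)
qed

lemma lead_mono_le: "lead_mono l F p \<Longrightarrow> F (fst m) (snd m) \<noteq> 0 \<Longrightarrow> mono_le l p m"
  by (cases m) (auto simp: lead_mono_def)

lemma sum_eq_single:
  "finite A \<Longrightarrow> x \<in> A \<Longrightarrow> (\<And>y. y \<in> A \<Longrightarrow> g y \<noteq> 0 \<Longrightarrow> y = x) \<Longrightarrow> sum g A = g x"
  by (subst sum.mono_neutral_right[of A "{x}"]) auto

lemma bmult_cartesian:
  "bmult F G i j = (\<Sum>(a, b)\<in>{..i} \<times> {..j}. F a b * G (i - a) (j - b))"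
  unfolding bmult_def by (simp add: sum.cartesian_product)

lemma bmult_nonzero_split:
  assumes "bmult F G i j \<noteq> 0"
  obtains m m' where "F (fst m) (snd m) \<noteq> 0" "G (fst m') (snd m') \<noteq> 0" "m + m' = (i, j)"
proof -
  obtain a b where "a \<le> i" "b \<le> j" "F a b * G (i - a) (j - b) \<noteq> 0"
    using assms unfolding bmult_cartesian by (auto elim: sum.not_neutral_contains_not_neutral)
  then show thesis
    by (intro that[of "(a, b)" "(i - a, j - b)"]) auto
qed

lemma bsubst_nonzero_split:
  assumes "bsubst g P R i j \<noteq> 0"
  obtains u v where "g u v \<noteq> 0" "bmult (bpow P u) (bpow R v) i j \<noteq> 0"
  using assms unfolding bsubst_def
  by (auto elim!: sum.not_neutral_contains_not_neutral)

lemma lead_mono_bmult: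
  assumes F: "lead_mono l F p" and G: "lead_mono l G r"
  shows "lead_mono l (bmult F G) (p + r)"
proof -
  have below: "mono_le l (p + r) (m + m') \<and> (m + m' = p + r \<longrightarrow> m = p \<and> m' = r)"
    if "F (fst m) (snd m) \<noteq> 0" "G (fst m') (snd m') \<noteq> 0" for m m'
  proof -
    have "mono_le l p m" "mono_le l r m'"
      using F G that by (auto intro: lead_mono_le)
    then show ?thesis
      using mono_le_add mono_le_add_cancel by blast
  qed
  obtain p1 p2 r1 r2 where pr: "p = (p1, p2)" "r = (r1, r2)" by fastforce
  have "bmult F G (p1 + r1) (p2 + r2) = F p1 p2 * G r1 r2"
    unfolding bmult_cartesian
  proof (subst sum_eq_single[of _ "(p1, p2)"])
    fix m assume "m \<in> {..p1 + r1} \<times> {..p2 + r2}"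
      "(\<lambda>(a, b). F a b * G (p1 + r1 - a) (p2 + r2 - b)) m \<noteq> 0"
    then show "m = (p1, p2)"
      using below[of m "(p1 + r1 - fst m, p2 + r2 - snd m)"] pr by (cases m) auto
  qed auto
  then have "bmult F G (fst (p + r)) (snd (p + r)) \<noteq> 0"
    using F G pr by (simp add: lead_mono_def)
  moreover have "mono_le l (p + r) (i, j)" if "bmult F G i j \<noteq> 0" for i j
    using that by (elim bmult_nonzero_split) (metis below)
  ultimately show ?thesis
    by (simp add: lead_mono_def)
qed

lemma lead_mono_bpow: "lead_mono l F m \<Longrightarrow> lead_mono l (bpow F k) (smul k m)"
proof (induction k)
  case 0
  then show ?case by (simp add: lead_mono_def bone_def mono_le_def smul_def)
next
  case (Suc k)
  have "smul (Suc k) m = m + smul k m" by (cases m) (simp add: smul_def)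
  then show ?case using lead_mono_bmult[OF Suc.prems Suc.IH[OF Suc.prems]] by simp
qed

lemma smul_add_bound:
  assumes "p \<noteq> 0" "r \<noteq> 0" "smul u p + smul v r = (i, j)"
  shows "u \<le> i + j" "v \<le> i + j"
proof -
  have "1 \<le> fst p + snd p" "1 \<le> fst r + snd r"
    using assms(1,2) by (auto simp: prod_eq_iff)
  then have "u \<le> u * (fst p + snd p)" "v \<le> v * (fst r + snd r)"
    by simp_all
  moreover have "i + j = u * (fst p + snd p) + v * (fst r + snd r)"
    using assms(3)[symmetric] by (simp add: smul_def algebra_simps)
  ultimately show "u \<le> i + j" "v \<le> i + j"
    by linarith+
qed

(* The hypotheses p \<noteq> 0 and r \<noteq> 0 ensure that the truncation of the sum in bsubst keeps the
   term (u0, v0). *)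
lemma lead_mono_bsubst:
  assumes P: "lead_mono l P p" and R: "lead_mono l R r" and "p \<noteq> 0" "r \<noteq> 0"
    and g0: "g u0 v0 \<noteq> 0"
    and g_above: "\<And>u v. g u v \<noteq> 0 \<Longrightarrow> (u, v) \<noteq> (u0, v0) \<Longrightarrow>
       mono_le l (smul u0 p + smul v0 r) (smul u p + smul v r) \<and>
       smul u p + smul v r \<noteq> smul u0 p + smul v0 r"
  shows "lead_mono l (bsubst g P R) (smul u0 p + smul v0 r)"
proof -
  define T where "T u v = bmult (bpow P u) (bpow R v)" for u v
  have T_lead: "lead_mono l (T u v) (smul u p + smul v r)" for u v
    unfolding T_def by (intro lead_mono_bmult lead_mono_bpow P R)
  obtain i j where M: "smul u0 p + smul v0 r = (i, j)" by fastforce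
  note bounds = smul_add_bound[OF \<open>p \<noteq> 0\<close> \<open>r \<noteq> 0\<close> M]
  have others: "u = u0 \<and> v = v0" if "g u v \<noteq> 0" "T u v i j \<noteq> 0" for u v
  proof (rule ccontr)
    assume "\<not> (u = u0 \<and> v = v0)"
    moreover have "mono_le l (smul u p + smul v r) (i, j)"
      using that T_lead[of u v] lead_mono_le[of l "T u v" _ "(i, j)"] by auto
    ultimately show False
      using g_above[OF that(1)] M mono_le_antisym by (metis prod.inject)
  qed
  have "bsubst g P R i j = (\<Sum>(u, v)\<in>{..i + j} \<times> {..i + j}. g u v * T u v i j)"
    unfolding bsubst_def T_def sum.cartesian_product ..
  also have "\<dots> = g u0 v0 * T u0 v0 i j"
    by (subst sum_eq_single[of _ "(u0, v0)"]) (auto simp: bounds dest: others)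
  finally have "bsubst g P R i j \<noteq> 0"
    using g0 T_lead[of u0 v0] M by (simp add: lead_mono_def)
  moreover have "mono_le l (i, j) (i', j')" if nz: "bsubst g P R i' j' \<noteq> 0" for i' j'
  proof -
    obtain u v where "g u v \<noteq> 0" "T u v i' j' \<noteq> 0"
      using bsubst_nonzero_split[OF nz] unfolding T_def by metis
    then have "mono_le l (smul u p + smul v r) (i', j')" "g u v \<noteq> 0"
      using T_lead[of u v] lead_mono_le[of l "T u v" _ "(i', j')"] by auto
    then show ?thesis
      using g_above[of u v] M by (cases "(u, v) = (u0, v0)") (auto intro: mono_le_trans)
  qed
  ultimately show ?thesis
    using M by (simp add: lead_mono_def)
qed

lemma lead_mono_exists:
  assumes "l > 0" and "F i j \<noteq> 0"
  obtains m where "lead_mono l F m"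
proof -
  define c where "c = wdeg l (i, j)"
  define S where "S = {m. F (fst m) (snd m) \<noteq> 0 \<and> wdeg l m \<le> c}"
  have "S \<subseteq> {..nat \<lceil>c\<rceil>} \<times> {..nat \<lceil>c / l\<rceil>}"
  proof
    fix m assume "m \<in> S"
    moreover have "0 \<le> l * real (snd m)" using \<open>l > 0\<close> by simp
    ultimately have "real (fst m) \<le> c" "l * real (snd m) \<le> c"
      by (auto simp: S_def wdeg_def)
    then have "real (fst m) \<le> c" "real (snd m) \<le> c / l"
      using \<open>l > 0\<close> by (simp_all add: field_simps)
    then have "fst m \<le> nat \<lceil>c\<rceil>" "snd m \<le> nat \<lceil>c / l\<rceil>"
      by linarith+
    then show "m \<in> {..nat \<lceil>c\<rceil>} \<times> {..nat \<lceil>c / l\<rceil>}"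
      by (cases m) auto
  qed
  then have "finite S" by (rule finite_subset) auto
  moreover have "(i, j) \<in> S" using assms by (simp add: S_def c_def)
  ultimately obtain m where m: "m \<in> S" "\<forall>m'\<in>S. mono_le l m m'"
    using mono_le_finite_min by blast
  have "mono_le l m (i', j')" if "F i' j' \<noteq> 0" for i' j'
    using m that by (cases "(i', j') \<in> S") (auto simp: S_def mono_le_def)
  then show thesis
    using m by (intro that[of m]) (auto simp: lead_mono_def S_def)
qed

lemma wdeg_geD: "wdeg_ge l F c \<Longrightarrow> F (fst m) (snd m) \<noteq> 0 \<Longrightarrow> c \<le> wdeg l m"
  by (cases m) (simp add: wdeg_ge_def)

lemma wdeg_ge_bmult:
  assumes "wdeg_ge l F c" "wdeg_ge l G c'"
  shows "wdeg_ge l (bmult F G) (c + c')"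
  unfolding wdeg_ge_def
proof (intro allI impI)
  fix i j assume "bmult F G i j \<noteq> 0"
  then obtain m m' where "F (fst m) (snd m) \<noteq> 0" "G (fst m') (snd m') \<noteq> 0" "m + m' = (i, j)"
    by (elim bmult_nonzero_split)
  then show "c + c' \<le> wdeg l (i, j)"
    using assms unfolding wdeg_ge_def by (metis add_mono prod.collapse wdeg_add)
qed

lemma wdeg_ge_bpow: "wdeg_ge l F c \<Longrightarrow> wdeg_ge l (bpow F k) (real k * c)"
proof (induction k)
  case 0
  then show ?case by (simp add: wdeg_ge_def bone_def wdeg_def)
next
  case (Suc k)
  then show ?case
    using wdeg_ge_bmult[OF Suc.prems Suc.IH[OF Suc.prems]] by (simp add: algebra_simps)
qed

lemma wdeg_ge_bsubst:
  assumes "wdeg_ge l P c" "wdeg_ge l R c'" "\<And>u v. g u v \<noteq> 0 \<Longrightarrow> b \<le> real u * c + real v * c'"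
  shows "wdeg_ge l (bsubst g P R) b"
  unfolding wdeg_ge_def
proof (intro allI impI)
  fix i j assume "bsubst g P R i j \<noteq> 0"
  then obtain u v where "g u v \<noteq> 0" "bmult (bpow P u) (bpow R v) i j \<noteq> 0"
    by (elim bsubst_nonzero_split)
  moreover have "wdeg_ge l (bmult (bpow P u) (bpow R v)) (real u * c + real v * c')"
    by (intro wdeg_ge_bmult wdeg_ge_bpow assms)
  ultimately show "b \<le> wdeg l (i, j)"
    using assms(3) unfolding wdeg_ge_def by force
qed

lemma wl_eq_wdeg:
  assumes "wdeg_ge l F c" "F i j \<noteq> 0" "wdeg l (i, j) = c"
  shows "wl l F = c"
  unfolding wl_def
proof (rule cInf_eq_minimum)
  show "c \<in> {real i + l * real j |i j. F i j \<noteq> 0}"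
    using assms(2,3) by (auto simp: wdeg_def)
qed (use assms(1) in \<open>auto simp: wdeg_ge_def wdeg_def\<close>)

section \<open>The Newton polygon\<close>

lemma newton_polygon_memI:
  "q i j \<noteq> 0 \<Longrightarrow> real i \<le> x \<Longrightarrow> real j \<le> y \<Longrightarrow> (x, y) \<in> newton_polygon q"
  unfolding newton_polygon_def by (rule hull_inc) blast

lemma convex_newton_polygon: "convex (newton_polygon q)"
  unfolding newton_polygon_def by (rule convex_convex_hull)

lemma newton_polygon_shift_up:
  assumes "z \<in> newton_polygon q" "0 \<le> t"
  shows "z + (0, t) \<in> newton_polygon q"
proof -
  define V where "V = (\<Inter>t\<in>{0..}. (+) (- (0, t)) ` newton_polygon q)"
  have "convex V"
    unfolding V_def by (intro convex_INT convex_translation convex_newton_polygon)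
  moreover have "(x, y) \<in> V" if "q i j \<noteq> 0" "real i \<le> x" "real j \<le> y" for i j x y
    unfolding V_def
  proof
    fix t :: real assume "t \<in> {0..}"
    then show "(x, y) \<in> (+) (- (0, t)) ` newton_polygon q"
      using that by (intro image_eqI[of _ _ "(x, y + t)"]) (auto intro: newton_polygon_memI)
  qed
  ultimately have "newton_polygon q \<subseteq> V"
    unfolding newton_polygon_def by (intro hull_minimal) auto
  then have "z \<in> (+) (- (0, t)) ` newton_polygon q"
    using assms unfolding V_def by blast
  then show ?thesis
    by (auto simp: algebra_simps)
qed

lemma not_extreme_point_midpoint:
  "a \<in> S \<Longrightarrow> b \<in> S \<Longrightarrow> a \<noteq> b \<Longrightarrow> \<not> midpoint a b extreme_point_of S"
  unfolding extreme_point_of_def using midpoint_in_open_segment by blast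

lemma extreme_point_newton_polygon_monomial:
  assumes z: "z extreme_point_of newton_polygon q"
  obtains i j where "q i j \<noteq> 0" "z = (real i, real j)"
proof -
  have "z \<in> \<Union>{{(x, y). real i \<le> x \<and> real j \<le> y} | i j. q i j \<noteq> 0}"
    using z unfolding newton_polygon_def by (rule extreme_point_of_convex_hull)
  then obtain i j where ij: "q i j \<noteq> 0" "real i \<le> fst z" "real j \<le> snd z"
    by auto
  have "fst z = real i"
  proof (rule ccontr)
    assume "fst z \<noteq> real i"
    then have "\<not> midpoint (real i, snd z) (2 * fst z - real i, snd z)
        extreme_point_of newton_polygon q"
      using ij by (intro not_extreme_point_midpoint newton_polygon_memI) auto
    then show False
      using z by (simp add: midpoint_def)
  qed
  moreover have "snd z = real j"
  proof (rule ccontr)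
    assume "snd z \<noteq> real j"
    then have "\<not> midpoint (fst z, real j) (fst z, 2 * snd z - real j)
        extreme_point_of newton_polygon q"
      using ij by (intro not_extreme_point_midpoint newton_polygon_memI) auto
    then show False
      using z by (simp add: midpoint_def)
  qed
  ultimately show thesis
    using ij by (intro that[of i j]) (auto simp: prod_eq_iff)
qed

lemma open_segment_inner_ge_eq:
  fixes a b x w :: "'a::real_inner"
  assumes "x \<in> open_segment a b" "c \<le> w \<bullet> a" "c \<le> w \<bullet> b" "w \<bullet> x = c"
  shows "w \<bullet> a = c \<and> w \<bullet> b = c"
proof -
  obtain t where t: "0 < t" "t < 1" "x = (1 - t) *\<^sub>R a + t *\<^sub>R b"
    using assms(1) by (auto simp: in_segment)
  then have "w \<bullet> x = (1 - t) * (w \<bullet> a) + t * (w \<bullet> b)"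
    by (simp add: inner_add_right)
  then have "(1 - t) * (w \<bullet> a - c) + t * (w \<bullet> b - c) = 0"
    using assms(4) by (simp add: algebra_simps)
  moreover have "0 \<le> (1 - t) * (w \<bullet> a - c)" "0 \<le> t * (w \<bullet> b - c)"
    using t assms(2,3) by simp_all
  ultimately have "(1 - t) * (w \<bullet> a - c) = 0" "t * (w \<bullet> b - c) = 0"
    by linarith+
  then show ?thesis
    using t by simp
qed

lemma convex_lex_halfspace:
  fixes v w :: "'a::real_inner"
  shows "convex {z. c < v \<bullet> z \<or> (v \<bullet> z = c \<and> w \<bullet> z \<le> d)}"
proof (rule convexI)
  fix x y and s t :: real
  assume x: "x \<in> {z. c < v \<bullet> z \<or> (v \<bullet> z = c \<and> w \<bullet> z \<le> d)}"
    and y: "y \<in> {z. c < v \<bullet> z \<or> (v \<bullet> z = c \<and> w \<bullet> z \<le> d)}"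
    and st: "0 \<le> s" "0 \<le> t" "s + t = 1"
  have lin: "u \<bullet> (s *\<^sub>R x + t *\<^sub>R y) = s * (u \<bullet> x) + t * (u \<bullet> y)" for u
    by (simp add: inner_add_right)
  consider "s = 0" | "t = 0" | "0 < s" "0 < t"
    using st by linarith
  then show "s *\<^sub>R x + t *\<^sub>R y \<in> {z. c < v \<bullet> z \<or> (v \<bullet> z = c \<and> w \<bullet> z \<le> d)}"
  proof cases
    case 3
    have ge: "s * c \<le> s * (v \<bullet> x)" "t * c \<le> t * (v \<bullet> y)"
      using x y st by (auto intro!: mult_left_mono)
    show ?thesis
    proof (cases "c < v \<bullet> x \<or> c < v \<bullet> y")
      case True
      then have "s * c + t * c < s * (v \<bullet> x) + t * (v \<bullet> y)"
        using ge 3 by (auto intro: add_less_le_mono add_le_less_mono)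
      then show ?thesis
        using st by (simp add: lin flip: distrib_right)
    next
      case False
      then have "v \<bullet> x = c" "v \<bullet> y = c" "w \<bullet> x \<le> d" "w \<bullet> y \<le> d"
        using x y by auto
      moreover have "s * (w \<bullet> x) + t * (w \<bullet> y) \<le> s * d + t * d"
        using calculation st by (intro add_mono mult_left_mono) auto
      ultimately show ?thesis
        using st by (simp add: lin flip: distrib_right)
    qed
  qed (use x y st in auto)
qed

lemma lead_mono_extreme_point:
  assumes "l > 0" and lead: "lead_mono l q m"
  shows "(real (fst m), real (snd m)) extreme_point_of newton_polygon q"
proof -
  define M where "M = (real (fst m), real (snd m))"
  define c where "c = wdeg l m"
  define H :: "(real \<times> real) set"
    where "H = {z. c < (1, l) \<bullet> z \<or> ((1, l) \<bullet> z = c \<and> (0, 1) \<bullet> z \<le> real (snd m))}"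
  have gen: "(x, y) \<in> H" if "q i j \<noteq> 0" "real i \<le> x" "real j \<le> y" for i j x y
  proof -
    have "mono_le l m (i, j)"
      using lead that(1) lead_mono_le by fastforce
    moreover have "wdeg l (i, j) \<le> x + l * y" "real j < y \<Longrightarrow> wdeg l (i, j) < x + l * y"
      using that \<open>l > 0\<close> by (auto simp: wdeg_def intro!: add_mono add_le_less_mono)
    ultimately show ?thesis
      using that by (cases "real j < y") (auto simp: H_def c_def mono_le_def)
  qed
  have N_sub_H: "newton_polygon q \<subseteq> H"
    unfolding newton_polygon_def
  proof (rule hull_minimal)
    show "convex H"
      unfolding H_def by (rule convex_lex_halfspace)
  qed (use gen in blast)
  have M_in: "M \<in> newton_polygon q"
    using lead by (auto simp: M_def lead_mono_def intro: newton_polygon_memI)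
  have collapse: "a = b" if "a \<in> H" "b \<in> H" "M \<in> open_segment a b" for a b
  proof -
    have "(1, l) \<bullet> M = c"
      by (simp add: M_def c_def wdeg_def)
    then have "(1, l) \<bullet> a = c" "(1, l) \<bullet> b = c"
      using that open_segment_inner_ge_eq[of M a b c "(1, l)"] by (auto simp: H_def)
    moreover have "snd a \<le> real (snd m)" "snd b \<le> real (snd m)"
      using that calculation by (auto simp: H_def inner_prod_def)
    ultimately have "(0, -1) \<bullet> a = - real (snd m)" "(0, -1) \<bullet> b = - real (snd m)"
      using that(3) open_segment_inner_ge_eq[of M a b "- real (snd m)" "(0, -1)"]
      by (auto simp: M_def inner_prod_def)
    with \<open>(1, l) \<bullet> a = c\<close> \<open>(1, l) \<bullet> b = c\<close> show "a = b"
      by (simp add: prod_eq_iff inner_prod_def)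
  qed
  show ?thesis
    unfolding M_def[symmetric] extreme_point_of_def
  proof (intro conjI ballI notI M_in)
    fix a b assume "a \<in> newton_polygon q" "b \<in> newton_polygon q" "M \<in> open_segment a b"
    with N_sub_H collapse have "a = b" by blast
    with \<open>M \<in> open_segment a b\<close> show False by simp
  qed
qed

lemma newton_polygon_no_extreme_above_chord:
  fixes L A B :: "real \<times> real"
  assumes L: "L \<in> newton_polygon q" and B: "B \<in> newton_polygon q" and "l > 0"
    and order: "fst L < fst A" "fst A < fst B"
    and below: "(1, l) \<bullet> L < (1, l) \<bullet> A" "(1, l) \<bullet> B \<le> (1, l) \<bullet> A"
  shows "\<not> A extreme_point_of newton_polygon q"
proof
  assume A: "A extreme_point_of newton_polygon q"
  define \<theta> where "\<theta> = (fst A - fst L) / (fst B - fst L)"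
  have \<theta>: "0 < \<theta>" "\<theta> < 1"
    using order by (auto simp: \<theta>_def field_simps)
  define Z where "Z = (1 - \<theta>) *\<^sub>R L + \<theta> *\<^sub>R B"
  have Z: "Z \<in> newton_polygon q"
    unfolding Z_def using \<theta> L B by (intro convexD_alt convex_newton_polygon) auto
  have "\<theta> * (fst B - fst L) = fst A - fst L"
    using order by (simp add: \<theta>_def)
  then have "fst Z = fst A"
    by (simp add: Z_def algebra_simps)
  moreover have "(1, l) \<bullet> Z < (1, l) \<bullet> A"
  proof -
    have "(1, l) \<bullet> Z = (1 - \<theta>) * ((1, l) \<bullet> L) + \<theta> * ((1, l) \<bullet> B)"
      by (simp add: Z_def inner_add_right)
    also have "\<dots> < (1 - \<theta>) * ((1, l) \<bullet> A) + \<theta> * ((1, l) \<bullet> A)"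
      using \<theta> below by (intro add_less_le_mono mult_strict_left_mono mult_left_mono) auto
    finally show ?thesis
      by (simp add: algebra_simps)
  qed
  ultimately have "snd Z < snd A"
    using \<open>l > 0\<close> by (simp add: inner_prod_def)
  then have "Z + (0, 2 * (snd A - snd Z)) \<in> newton_polygon q"
    by (intro newton_polygon_shift_up Z) simp
  moreover have "midpoint Z (Z + (0, 2 * (snd A - snd Z))) = A"
    using \<open>fst Z = fst A\<close> by (simp add: midpoint_def prod_eq_iff)
  moreover have "Z \<noteq> Z + (0, 2 * (snd A - snd Z))"
    using \<open>snd Z < snd A\<close> by (simp add: prod_eq_iff)
  ultimately show False
    using A Z not_extreme_point_midpoint by metis
qed

lemma lift_Suc_mono_less_bounded:
  fixes f :: "nat \<Rightarrow> 'a::order"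
  assumes "\<And>i. k \<le> i \<Longrightarrow> i < j \<Longrightarrow> f i < f (Suc i)" "k < j"
  shows "f k < f j"
  using assms
proof (induction j)
  case (Suc j)
  then show ?case
    by (cases "k = j") (auto intro: order.strict_trans)
qed simp

lemma newton_polygon_vertex:
  fixes ns ms :: "nat \<Rightarrow> nat"
  assumes vertices: "{(real (ns k), real (ms k)) | k. 1 \<le> k \<and> k \<le> s}
                     = {v. v extreme_point_of newton_polygon q}"
    and "1 \<le> k" "k \<le> s"
  shows "(real (ns k), real (ms k)) extreme_point_of newton_polygon q" "q (ns k) (ms k) \<noteq> 0"
proof -
  have "(real (ns k), real (ms k)) \<in> {(real (ns k), real (ms k)) | k. 1 \<le> k \<and> k \<le> s}"
    using assms(2,3) by blast
  then show extreme: "(real (ns k), real (ms k)) extreme_point_of newton_polygon q"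
    by (simp only: vertices mem_Collect_eq)
  then show "q (ns k) (ms k) \<noteq> 0"
    by (auto elim: extreme_point_newton_polygon_monomial)
qed

lemma newton_polygon_vertex_above_last_edge:
  fixes ns ms :: "nat \<Rightarrow> nat"
  assumes ns_mono: "\<And>k. 1 \<le> k \<Longrightarrow> k < s \<Longrightarrow> ns k < ns (Suc k)"
    and vertices: "{(real (ns k), real (ms k)) | k. 1 \<le> k \<and> k \<le> s}
                     = {v. v extreme_point_of newton_polygon q}"
    and "s > 1" "l > 0"
    and edge: "real (ns (s - 1)) + l * real (ms (s - 1)) = real (ns s) + l * real (ms s)"
    and k: "1 \<le> k" "k \<le> s"
  shows "real (ns s) + l * real (ms s) \<le> real (ns k) + l * real (ms k)"
proof (rule ccontr)
  assume below: "\<not> ?thesis"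
  with edge k have "k < s - 1"
    by (cases "k = s \<or> k = s - 1") auto
  then have "ns k < ns (s - 1)"
    using k(1) by (rule_tac lift_Suc_mono_less_bounded) (auto intro: ns_mono)
  have "\<not> (real (ns (s - 1)), real (ms (s - 1))) extreme_point_of newton_polygon q"
  proof (rule newton_polygon_no_extreme_above_chord[where l = l])
    show "(real (ns k), real (ms k)) \<in> newton_polygon q"
      "(real (ns s), real (ms s)) \<in> newton_polygon q"
      using newton_polygon_vertex(1)[OF vertices] k \<open>s > 1\<close> by (auto simp: extreme_point_of_def)
    show "fst (real (ns k), real (ms k)) < fst (real (ns (s - 1)), real (ms (s - 1)))"
      "fst (real (ns (s - 1)), real (ms (s - 1))) < fst (real (ns s), real (ms s))"
      using \<open>ns k < ns (s - 1)\<close> ns_mono[of "s - 1"] \<open>s > 1\<close> by simp_all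
  qed (use below edge \<open>l > 0\<close> in simp_all)
  moreover have "1 \<le> s - 1" "s - 1 \<le> s"
    using \<open>s > 1\<close> by simp_all
  ultimately show False
    using newton_polygon_vertex(1)[OF vertices] by blast
qed

lemma newton_polygon_last_edge_bound:
  fixes ns ms :: "nat \<Rightarrow> nat"
  assumes ns_mono: "\<And>k. 1 \<le> k \<Longrightarrow> k < s \<Longrightarrow> ns k < ns (Suc k)"
    and vertices: "{(real (ns k), real (ms k)) | k. 1 \<le> k \<and> k \<le> s}
                     = {v. v extreme_point_of newton_polygon q}"
    and "s > 1" and ms_last: "ms s < ms (s - 1)"
    and l_def: "l = (real (ns s) - real (ns (s - 1))) / (real (ms (s - 1)) - real (ms s))"
    and "q u v \<noteq> 0"
  shows "real (ns s) + l * real (ms s) \<le> real u + l * real v"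
proof -
  have "l > 0"
    using ns_mono[of "s - 1"] \<open>s > 1\<close> ms_last by (simp add: l_def)
  have "l * (real (ms (s - 1)) - real (ms s)) = real (ns s) - real (ns (s - 1))"
    using ms_last by (simp add: l_def)
  then have edge: "real (ns (s - 1)) + l * real (ms (s - 1)) = real (ns s) + l * real (ms s)"
    by (simp add: algebra_simps)
  obtain m where lead: "lead_mono l q m"
    using lead_mono_exists[of l q u v] \<open>l > 0\<close> \<open>q u v \<noteq> 0\<close> by blast
  have "(real (fst m), real (snd m)) \<in> {v. v extreme_point_of newton_polygon q}"
    using lead_mono_extreme_point[OF \<open>l > 0\<close> lead] by simp
  then obtain k where k: "1 \<le> k" "k \<le> s" "fst m = ns k" "snd m = ms k"
    unfolding vertices[symmetric] by auto
  have "real (ns s) + l * real (ms s) \<le> real (ns k) + l * real (ms k)"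
    by (rule newton_polygon_vertex_above_last_edge[OF ns_mono vertices \<open>s > 1\<close> \<open>l > 0\<close> edge k(1,2)])
  also have "\<dots> = wdeg l m"
    using k by (simp add: wdeg_def)
  also have "\<dots> \<le> wdeg l (u, v)"
    using lead_mono_le[OF lead, of "(u, v)"] \<open>q u v \<noteq> 0\<close> by (auto simp: mono_le_def)
  finally show ?thesis
    by (simp add: wdeg_def)
qed

section \<open>Iterates of the skew product\<close>

definition Pit :: "(nat \<Rightarrow> complex) \<Rightarrow> bser \<Rightarrow> nat \<Rightarrow> bser" where
  "Pit a q n = fst (skew_iter a q n)"

lemma skew_iter_simps:
  "Pit a q 0 = bZ" "Qit a q 0 = bW"
  "Pit a q (Suc n) = bsubst (zser a) (Pit a q n) (Qit a q n)"
  "Qit a q (Suc n) = bsubst q (Pit a q n) (Qit a q n)"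
  by (simp_all add: Pit_def Qit_def split_beta)

lemma lead_mono_bsubst_zser:
  assumes P: "lead_mono l P (t, 0)" "t \<ge> 1" and R: "lead_mono l R r" "r \<noteq> 0"
    and a_low: "\<And>i. i < \<delta> \<Longrightarrow> a i = 0" and "a \<delta> \<noteq> 0"
  shows "lead_mono l (bsubst (zser a) P R) (\<delta> * t, 0)"
proof -
  have "lead_mono l (bsubst (zser a) P R) (smul \<delta> (t, 0) + smul 0 r)"
  proof (rule lead_mono_bsubst[OF P(1) R(1)])
    fix u v assume "zser a u v \<noteq> 0" "(u, v) \<noteq> (\<delta>, 0)"
    then have "v = 0" "\<delta> < u"
      using a_low by (auto simp: zser_def split: if_splits) (metis linorder_neqE_nat)
    moreover have "real \<delta> * real t < real u * real t"
      using \<open>\<delta> < u\<close> \<open>t \<ge> 1\<close> by simp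
    ultimately show "mono_le l (smul \<delta> (t, 0) + smul 0 r) (smul u (t, 0) + smul v r) \<and>
        smul u (t, 0) + smul v r \<noteq> smul \<delta> (t, 0) + smul 0 r"
      using \<open>t \<ge> 1\<close> by (auto simp: mono_le_def wdeg_def smul_def)
  qed (use \<open>t \<ge> 1\<close> \<open>r \<noteq> 0\<close> \<open>a \<delta> \<noteq> 0\<close> in \<open>auto simp: zser_def zero_prod_def\<close>)
  then show ?thesis
    by (simp add: smul_def)
qed

lemma lead_mono_bsubst_homogeneous:
  assumes P: "lead_mono l P (t, 0)" "t \<ge> 1"
    and R: "lead_mono l R r" "wdeg l r = l * real t" "l > 0"
    and g: "lead_mono l g (u0, v0)" and v0: "v0 = 0 \<or> 0 < snd r"
  shows "lead_mono l (bsubst g P R) (smul u0 (t, 0) + smul v0 r)"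
proof (rule lead_mono_bsubst[OF P(1) R(1)])
  have wdeg_image: "wdeg l (smul u (t, 0) + smul v r) = real t * wdeg l (u, v)" for u v
    using R(2) by (simp add: wdeg_add wdeg_smul) (simp add: wdeg_def algebra_simps)
  fix u v assume uv: "g u v \<noteq> 0" "(u, v) \<noteq> (u0, v0)"
  have "mono_le l (u0, v0) (u, v)"
    using g uv(1) lead_mono_le by fastforce
  then consider "wdeg l (u0, v0) < wdeg l (u, v)" | "wdeg l (u0, v0) = wdeg l (u, v)" "v < v0"
    using uv(2) unfolding mono_le_def by (fastforce simp: wdeg_def)
  then show "mono_le l (smul u0 (t, 0) + smul v0 r) (smul u (t, 0) + smul v r) \<and>
      smul u (t, 0) + smul v r \<noteq> smul u0 (t, 0) + smul v0 r"
  proof cases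
    case 1
    then have "wdeg l (smul u0 (t, 0) + smul v0 r) < wdeg l (smul u (t, 0) + smul v r)"
      using \<open>t \<ge> 1\<close> by (simp add: wdeg_image)
    then show ?thesis
      by (intro mono_le_strictI) simp
  next
    case 2
    then have "wdeg l (smul u0 (t, 0) + smul v0 r) = wdeg l (smul u (t, 0) + smul v r)"
      by (simp add: wdeg_image)
    moreover have "snd (smul u (t, 0) + smul v r) < snd (smul u0 (t, 0) + smul v0 r)"
      using 2 v0 by (simp add: smul_def)
    ultimately show ?thesis
      by (intro mono_le_strictI) simp
  qed
qed (use P(2) R g in \<open>auto simp: lead_mono_def wdeg_def zero_prod_def\<close>)

lemma skew_iter_lead_mono:
  assumes "\<alpha> > 0" "\<delta> \<ge> 1" and a_low: "\<And>i. i < \<delta> \<Longrightarrow> a i = 0" and "a \<delta> \<noteq> 0"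
    and q_lead: "lead_mono \<alpha> q (u0, v0)" "wdeg \<alpha> (u0, v0) = \<alpha> * real \<delta>"
  shows "lead_mono \<alpha> (Pit a q n) (\<delta> ^ n, 0) \<and>
    (\<exists>r. lead_mono \<alpha> (Qit a q n) r \<and> wdeg \<alpha> r = \<alpha> * real \<delta> ^ n \<and> (v0 = 0 \<or> 0 < snd r))"
proof (induction n)
  case 0
  have "lead_mono \<alpha> bZ (1, 0)" "lead_mono \<alpha> bW (0, 1)"
    by (simp_all add: lead_mono_def bZ_def bW_def mono_le_def)
  then show ?case
    unfolding skew_iter_simps by (intro conjI exI[of _ "(0, 1)"]) (auto simp: wdeg_def)
next
  case (Suc n)
  then obtain r where P: "lead_mono \<alpha> (Pit a q n) (\<delta> ^ n, 0)"
    and R: "lead_mono \<alpha> (Qit a q n) r" "wdeg \<alpha> r = \<alpha> * real \<delta> ^ n" "v0 = 0 \<or> 0 < snd r"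
    by blast
  have "1 \<le> \<delta> ^ n"
    using \<open>\<delta> \<ge> 1\<close> by simp
  have "r \<noteq> 0"
    using R(2) \<open>\<alpha> > 0\<close> \<open>\<delta> \<ge> 1\<close> by (auto simp: wdeg_def zero_prod_def)
  have "lead_mono \<alpha> (Pit a q (Suc n)) (\<delta> * \<delta> ^ n, 0)"
    unfolding skew_iter_simps
    by (rule lead_mono_bsubst_zser[OF P \<open>1 \<le> \<delta> ^ n\<close> R(1) \<open>r \<noteq> 0\<close>])
      (use a_low \<open>a \<delta> \<noteq> 0\<close> in auto)
  moreover have "lead_mono \<alpha> (Qit a q (Suc n)) (smul u0 (\<delta> ^ n, 0) + smul v0 r)"
    unfolding skew_iter_simps
    using R(2) \<open>\<alpha> > 0\<close>
    by (intro lead_mono_bsubst_homogeneous[OF P \<open>1 \<le> \<delta> ^ n\<close> R(1) _ _ q_lead(1) R(3)]) simp_all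
  moreover have "wdeg \<alpha> (smul u0 (\<delta> ^ n, 0) + smul v0 r) = real \<delta> ^ n * wdeg \<alpha> (u0, v0)"
    using R(2) by (simp add: wdeg_add wdeg_smul) (simp add: wdeg_def algebra_simps)
  then have "wdeg \<alpha> (smul u0 (\<delta> ^ n, 0) + smul v0 r) = \<alpha> * real \<delta> ^ Suc n"
    using q_lead(2) by (simp add: algebra_simps)
  moreover have "v0 = 0 \<or> 0 < snd (smul u0 (\<delta> ^ n, 0) + smul v0 r)"
    using R(3) by (auto simp: smul_def)
  ultimately show ?case
    by (intro conjI exI[of _ "smul u0 (\<delta> ^ n, 0) + smul v0 r"]) simp_all
qed

lemma wdeg_ge_Pit:
  assumes "l \<ge> 0" and a_low: "\<And>i. i < \<delta> \<Longrightarrow> a i = 0"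
  shows "wdeg_ge l (Pit a q n) (real \<delta> ^ n)"
proof (induction n)
  case 0
  then show ?case
    by (simp add: skew_iter_simps wdeg_ge_def bZ_def wdeg_def)
next
  case (Suc n)
  have "wdeg_ge l (Qit a q n) 0"
    using \<open>l \<ge> 0\<close> by (simp add: wdeg_ge_def wdeg_def)
  then show ?case
    unfolding skew_iter_simps
  proof (rule wdeg_ge_bsubst[OF Suc.IH])
    fix u v assume "zser a u v \<noteq> 0"
    then have "\<delta> \<le> u" "v = 0"
      using a_low by (auto simp: zser_def split: if_splits) (meson not_le)
    then show "real \<delta> ^ Suc n \<le> real u * real \<delta> ^ n + real v * 0"
      by (simp add: mult_right_mono)
  qed
qed

lemma wdeg_ge_Qit:
  assumes "l \<ge> 0" "l * real \<delta> \<le> real \<gamma>" and a_low: "\<And>i. i < \<delta> \<Longrightarrow> a i = 0"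
    and q_above: "\<And>u v. q u v \<noteq> 0 \<Longrightarrow> real \<gamma> \<le> real u + l * real v"
  shows "wdeg_ge l (Qit a q (Suc n)) (real \<gamma> * real \<delta> ^ n)"
proof (induction n)
  case 0
  have "wdeg_ge l bZ 1" "wdeg_ge l bW l"
    by (simp_all add: wdeg_ge_def bZ_def bW_def wdeg_def)
  then show ?case
    unfolding skew_iter_simps
    by (rule wdeg_ge_bsubst) (use q_above in \<open>simp add: mult.commute\<close>)
next
  case (Suc n)
  show ?case
    unfolding skew_iter_simps(4)[of a q "Suc n"]
  proof (rule wdeg_ge_bsubst[OF wdeg_ge_Pit[OF \<open>l \<ge> 0\<close> a_low] Suc.IH])
    fix u v assume "q u v \<noteq> 0"
    have "l * real \<delta> ^ Suc n \<le> real \<gamma> * real \<delta> ^ n"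
      using \<open>l * real \<delta> \<le> real \<gamma>\<close> by (simp add: mult_right_mono mult.assoc[symmetric])
    then have "real v * (l * real \<delta> ^ Suc n) \<le> real v * (real \<gamma> * real \<delta> ^ n)"
      by (rule mult_left_mono) simp
    then have "(real u + l * real v) * real \<delta> ^ Suc n
        \<le> real u * real \<delta> ^ Suc n + real v * (real \<gamma> * real \<delta> ^ n)"
      by (simp add: algebra_simps)
    moreover have "real \<gamma> * real \<delta> ^ Suc n \<le> (real u + l * real v) * real \<delta> ^ Suc n"
      using q_above[OF \<open>q u v \<noteq> 0\<close>] by (rule mult_right_mono) simp
    ultimately show
      "real \<gamma> * real \<delta> ^ Suc n \<le> real u * real \<delta> ^ Suc n + real v * (real \<gamma> * real \<delta> ^ n)"
      by linarith
  qed
qed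

lemma lead_mono_on_edge:
  assumes "0 < \<alpha>" "q \<gamma> 0 \<noteq> 0"
    and q_above: "\<And>u v. q u v \<noteq> 0 \<Longrightarrow> real \<gamma> \<le> real u + \<alpha> * real v"
  obtains u0 v0 where "lead_mono \<alpha> q (u0, v0)" "wdeg \<alpha> (u0, v0) = real \<gamma>"
proof -
  obtain u0 v0 where lead: "lead_mono \<alpha> q (u0, v0)"
    using lead_mono_exists[of \<alpha> q \<gamma> 0] assms(1,2) by (metis prod.collapse)
  have "wdeg \<alpha> (u0, v0) \<le> real \<gamma>"
    using lead_mono_le[OF lead, of "(\<gamma>, 0)"] \<open>q \<gamma> 0 \<noteq> 0\<close> by (auto simp: mono_le_def wdeg_def)
  moreover have "real \<gamma> \<le> wdeg \<alpha> (u0, v0)"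
    using lead q_above by (auto simp: lead_mono_def wdeg_def)
  ultimately show thesis
    using lead by (intro that) auto
qed

lemma wl_Qit_eq:
  assumes "0 < l1" "l1 \<le> l" "l \<le> real \<gamma> / real \<delta>" "\<delta> \<ge> 1"
    and a_low: "\<And>i. i < \<delta> \<Longrightarrow> a i = 0" and "a \<delta> \<noteq> 0"
    and q_above: "\<And>u v. q u v \<noteq> 0 \<Longrightarrow> real \<gamma> \<le> real u + l1 * real v"
    and "q \<gamma> 0 \<noteq> 0" and "n \<ge> 1"
  shows "Qit a q n \<noteq> (\<lambda>i j. 0) \<and> wl l (Qit a q n) = real \<gamma> * real \<delta> ^ (n - 1)"
proof -
  define \<alpha> where "\<alpha> = real \<gamma> / real \<delta>"
  have \<delta>: "real \<delta> > 0"
    using \<open>\<delta> \<ge> 1\<close> by simp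
  have "0 < \<alpha>" "l \<le> \<alpha>"
    using assms(1-3) unfolding \<alpha>_def by linarith+
  have "l * real \<delta> \<le> real \<gamma>"
    using assms(3) \<delta> by (simp add: pos_le_divide_eq)
  have q_above': "real \<gamma> \<le> real u + l' * real v" if "q u v \<noteq> 0" "l1 \<le> l'" for u v l'
    using q_above[OF that(1)] mult_right_mono[OF that(2), of "real v"] by simp
  have "l1 \<le> \<alpha>"
    using \<open>l1 \<le> l\<close> \<open>l \<le> \<alpha>\<close> by linarith
  obtain u0 v0 where lead: "lead_mono \<alpha> q (u0, v0)" "wdeg \<alpha> (u0, v0) = real \<gamma>"
    using lead_mono_on_edge[of \<alpha> q \<gamma>, OF \<open>0 < \<alpha>\<close> \<open>q \<gamma> 0 \<noteq> 0\<close> q_above'] \<open>l1 \<le> \<alpha>\<close> by blast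
  have "wdeg \<alpha> (u0, v0) = \<alpha> * real \<delta>"
    using lead(2) \<delta> by (simp add: \<alpha>_def)
  then obtain r where r: "lead_mono \<alpha> (Qit a q n) r" "wdeg \<alpha> r = \<alpha> * real \<delta> ^ n"
    using skew_iter_lead_mono[of \<alpha> \<delta> a, OF \<open>0 < \<alpha>\<close> \<open>\<delta> \<ge> 1\<close> a_low \<open>a \<delta> \<noteq> 0\<close> lead(1)] by blast
  then have nz: "Qit a q n (fst r) (snd r) \<noteq> 0"
    by (simp add: lead_mono_def)
  obtain k where k: "n = Suc k"
    using \<open>n \<ge> 1\<close> by (cases n) auto
  have lower: "wdeg_ge l (Qit a q n) (real \<gamma> * real \<delta> ^ k)"
    unfolding k using \<open>0 < l1\<close> \<open>l1 \<le> l\<close> \<open>l * real \<delta> \<le> real \<gamma>\<close>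
    by (intro wdeg_ge_Qit a_low q_above') auto
  have "wdeg l r \<le> wdeg \<alpha> r"
    using \<open>l \<le> \<alpha>\<close> by (simp add: wdeg_def mult_right_mono)
  also have "\<dots> = real \<gamma> * real \<delta> ^ k"
    using r(2) \<delta> k by (simp add: \<alpha>_def)
  finally have "wdeg l r = real \<gamma> * real \<delta> ^ k"
    using wdeg_geD[OF lower nz] by linarith
  then show ?thesis
    using wl_eq_wdeg[OF lower nz] nz k by auto
qed

lemma gamma_n_d0: "n \<ge> 1 \<Longrightarrow> gamma_n \<gamma> \<delta> 0 n = \<gamma> * \<delta> ^ (n - 1)"
  by (cases n) (simp_all add: gamma_n_def sum.lessThan_Suc_shift del: sum.lessThan_Suc)

lemma y_intercept_iff_slope:
  assumes "n1 < n2" "0 < m1" "0 < x"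
  shows "x \<le> y_intercept n1 m1 n2 0 \<longleftrightarrow> (n2 - n1) / m1 \<le> n2 / x"
    and "x = y_intercept n1 m1 n2 0 \<longleftrightarrow> (n2 - n1) / m1 = n2 / x"
  using assms by (simp_all add: y_intercept_def field_simps)

theorem theorem4p1:
  fixes a :: "nat \<Rightarrow> complex" and q :: bser and \<delta> :: nat
    and s :: nat and ns ms :: "nat \<Rightarrow> nat"
  assumes p_conv: "\<exists>r>0. summable (\<lambda>i. norm (a i) * r ^ i)"
    and q_conv: "\<exists>r>0. (\<lambda>(i, j). norm (q i j) * r ^ (i + j)) summable_on (UNIV :: (nat \<times> nat) set)"
    and delta_ge: "\<delta> \<ge> 1"
    and a_low: "\<And>i. i < \<delta> \<Longrightarrow> a i = 0"
    and a_delta: "a \<delta> \<noteq> 0"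
    and q_00: "q 0 0 = 0"
    and q_nz: "\<exists>i j. q i j \<noteq> 0"
    and ns_mono: "\<And>k. 1 \<le> k \<Longrightarrow> k < s \<Longrightarrow> ns k < ns (Suc k)"
    and ms_mono: "\<And>k. 1 \<le> k \<Longrightarrow> k < s \<Longrightarrow> ms k > ms (Suc k)"
    and vertices: "{(real (ns k), real (ms k)) | k. 1 \<le> k \<and> k \<le> s}
                     = {v. v extreme_point_of newton_polygon q}"
    and s_gt: "s > 1"
    and case2: "real \<delta> \<le> y_intercept (ns (s-1)) (ms (s-1)) (ns s) (ms s)"
    and d0: "ms s = 0"
  shows "\<delta> > ms s \<and>
    (let \<gamma> = ns s; d = ms s;
         l1 = (real (ns s) - real (ns (s-1))) / (real (ms (s-1)) - real (ms s));
         \<alpha> = real \<gamma> / (real \<delta> - real d)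
     in (\<forall>n\<ge>1. Qit a q n \<noteq> (\<lambda>i j. 0) \<and> gamma_n \<gamma> \<delta> d n = \<gamma> * \<delta> ^ (n - 1) \<and>
                (\<forall>l\<in>{l1..\<alpha>}. wl l (Qit a q n) = real (gamma_n \<gamma> \<delta> d n))) \<and>
        (real \<delta> = y_intercept (ns (s-1)) (ms (s-1)) (ns s) (ms s) \<longrightarrow>
           {l1..\<alpha>} = {l1} \<and> (\<forall>n\<ge>1. wl l1 (Qit a q n) = real (gamma_n \<gamma> \<delta> d n))))"
proof -
  have last_edge: "ns (s - 1) < ns s" "ms s < ms (s - 1)"
    using ns_mono[of "s - 1"] ms_mono[of "s - 1"] s_gt by simp_all
  define l1 where "l1 = (real (ns s) - real (ns (s - 1))) / (real (ms (s - 1)) - real (ms s))"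
  have "0 < l1"
    using last_edge by (simp add: l1_def)
  have q_above: "real (ns s) \<le> real u + l1 * real v" if "q u v \<noteq> 0" for u v
    using newton_polygon_last_edge_bound[OF ns_mono vertices s_gt last_edge(2) l1_def that] d0
    by simp
  have "q (ns s) 0 \<noteq> 0"
    using newton_polygon_vertex(2)[OF vertices, of s] s_gt d0 by simp
  have slope: "l1 \<le> real (ns s) / real \<delta>"
    "real \<delta> = y_intercept (ns (s - 1)) (ms (s - 1)) (ns s) (ms s) \<Longrightarrow> l1 = real (ns s) / real \<delta>"
    using y_intercept_iff_slope[of "real (ns (s - 1))" "real (ns s)" "real (ms (s - 1))" "real \<delta>"]
      case2 last_edge d0 delta_ge
    by (simp_all add: l1_def)
  have wl: "Qit a q n \<noteq> (\<lambda>i j. 0) \<and> wl l (Qit a q n) = real (ns s) * real \<delta> ^ (n - 1)"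
    if "n \<ge> 1" "l1 \<le> l" "l \<le> real (ns s) / real \<delta>" for n l
    using wl_Qit_eq[OF \<open>0 < l1\<close> that(2,3) delta_ge, of a q] a_low a_delta q_above
      \<open>q (ns s) 0 \<noteq> 0\<close> that(1)
    by blast
  show ?thesis
    unfolding Let_def l1_def[symmetric]
    unfolding d0 of_nat_0 diff_0_right
  proof (intro conjI allI impI ballI)
    show "{l1..real (ns s) / real \<delta>} = {l1}"
      if "real \<delta> = y_intercept (ns (s - 1)) (ms (s - 1)) (ns s) 0"
      using slope(2) that d0 by simp
  qed (use delta_ge wl slope(1) gamma_n_d0 in auto)
qed

end
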